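(* Let $K$ be a formally real field and let $s>1$ be an integer. Let $g\in K[x,y]$ be a polynomial of $2s$-length $k$ (with $k$ a positive integer), and let $r$ be a positive integer such that $\deg_x g<2sr$. Then the polynomial $$G(x,y):=g(x,y)\,(y-x^r)^{2s}+1$$ has $2s$-length exactly $k+1$ in $K[x,y]$.
   Context: For a commutative ring $A$ with identity, a positive integer $m$ and $a\in A$, the $m$-length of $a$ is the smallest positive integer $\ell$ such that $a$ can be written as a sum of $\ell$ $m$-th powers of elements of $A$. A field is formally real if $-1$ is not a sum of squares in it. *)

theory Defs
  imports "HOL-Computational_Algebra.Polynomial"
begin

definition formally_real :: "'a::field itself \<Rightarrow> bool" where
  "formally_real _ \<longleftrightarrow> (\<forall>xs::'a list. sum_list (map (\<lambda>x. x ^ 2) xs) \<noteq> - 1)"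

definition sum_of_powers :: "nat \<Rightarrow> nat \<Rightarrow> 'a::comm_ring_1 \<Rightarrow> bool" where
  "sum_of_powers m l a \<longleftrightarrow> (\<exists>xs::'a list. length xs = l \<and> a = sum_list (map (\<lambda>x. x ^ m) xs))"

definition has_m_length :: "nat \<Rightarrow> 'a::comm_ring_1 \<Rightarrow> nat \<Rightarrow> bool" where
  "has_m_length m a k \<longleftrightarrow> 0 < k \<and> sum_of_powers m k a \<and> (\<forall>l. 0 < l \<and> l < k \<longrightarrow> \<not> sum_of_powers m l a)"

text \<open>Bivariate polynomials K[x,y] are represented as K[x][y]: type 'a poly poly,
  where the inner polynomials are in x and the outer variable is y.\<close>
definition var_x :: "'a::comm_ring_1 poly poly" where
  "var_x = [: [:0, 1:] :]"

definition var_y :: "'a::comm_ring_1 poly poly" where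
  "var_y = [: 0, 1 :]"

definition deg_x :: "'a::zero poly poly \<Rightarrow> nat" where
  "deg_x g = Max ((\<lambda>i. degree (coeff g i)) ` {..degree g})"

end

theory Submission
  imports Defs
begin

text \<open>Write \<open>t = y - x ^ r\<close> and suppose \<open>G = g t ^ (2 s) + 1 = \<Sum>i<l. f\<^sub>i ^ (2 s)\<close>.
  Over a formally real field the leading terms of a sum of even powers cannot cancel, so
  \<open>deg\<^sub>x f\<^sub>i < 2 r\<close>; on the curve \<open>y = x ^ r\<close>, where \<open>G = 1\<close>, every \<open>f\<^sub>i\<close> is a constant
  \<open>c\<^sub>i\<close>. Since a polynomial of \<open>x\<close>-degree below \<open>r\<close> is determined by its restriction to
  the curve, \<open>f\<^sub>i = c\<^sub>i - t p\<^sub>i\<close> with \<open>deg\<^sub>x p\<^sub>i < r\<close>. Expanding in powers of \<open>t\<close>, the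
  coefficient \<open>\<Sum>i. c\<^sub>i ^ (2 s - 1) p\<^sub>i\<close> of \<open>t\<close> vanishes on the curve and has \<open>x\<close>-degree
  below \<open>r\<close>, so it is zero; then the coefficient \<open>\<Sum>i. c\<^sub>i ^ (2 s - 2) p\<^sub>i ^ 2\<close> of \<open>t ^ 2\<close>, a
  sum of squares, vanishes on the curve, which forces \<open>p\<^sub>i = 0\<close> whenever \<open>c\<^sub>i \<noteq> 0\<close>.
  Hence \<open>f\<^sub>i ^ (2 s) = c\<^sub>i ^ (2 s) + t ^ (2 s) p\<^sub>i ^ (2 s)\<close>, so \<open>g = \<Sum>i. p\<^sub>i ^ (2 s)\<close>, and
  since some \<open>c\<^sub>j \<noteq> 0\<close> one of these summands is zero: \<open>g\<close> is a sum of \<open>l - 1\<close> powers.\<close>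

section \<open>Sums of squares over a formally real field\<close>

lemma formally_real_sum_squares_eq_0:
  assumes fr: "formally_real TYPE('a::field)"
    and sum: "sum_list (map (\<lambda>x. x ^ 2) xs) = (0::'a)" and x: "x \<in> set xs"
  shows "x = 0"
proof (rule ccontr)
  assume "x \<noteq> 0"
  have "sum_list (map (\<lambda>y. y ^ 2) xs) = x ^ 2 + sum_list (map (\<lambda>y. y ^ 2) (remove1 x xs))"
    using x by (rule sum_list_map_remove1)
  with sum have rest: "sum_list (map (\<lambda>y. y ^ 2) (remove1 x xs)) = - (x ^ 2)"
    by (simp add: eq_neg_iff_add_eq_0 add.commute)
  have "sum_list (map (\<lambda>y. (y / x) ^ 2) ys) = sum_list (map (\<lambda>y. y ^ 2) ys) / x ^ 2" for ys
    by (induct ys) (simp_all add: power_divide add_divide_distrib)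
  with rest \<open>x \<noteq> 0\<close> have "sum_list (map (\<lambda>y. y ^ 2) (map (\<lambda>y. y / x) (remove1 x xs))) = -1"
    by (simp add: o_def)
  with fr show False
    unfolding formally_real_def by blast
qed

lemma formally_real_of_nat_neq_0:
  assumes "formally_real TYPE('a::field)" and "n > 0"
  shows "(of_nat n :: 'a) \<noteq> 0"
proof
  assume "(of_nat n :: 'a) = 0"
  moreover have "sum_list (map (\<lambda>x. x ^ 2) (replicate n (1::'a))) = of_nat n"
    by (induct n) simp_all
  ultimately show False
    using formally_real_sum_squares_eq_0[OF assms(1), of "replicate n 1" 1] \<open>n > 0\<close> by simp
qed

lemma formally_real_inj_of_nat:
  assumes "formally_real TYPE('a::field)"
  shows "inj (of_nat :: nat \<Rightarrow> 'a)"
proof (rule linorder_injI)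
  fix m n :: nat
  assume "m < n"
  then have "(of_nat n :: 'a) - of_nat m = of_nat (n - m)"
    by (simp add: of_nat_diff)
  also have "\<dots> \<noteq> 0"
    using \<open>m < n\<close> by (intro formally_real_of_nat_neq_0[OF assms]) simp
  finally show "(of_nat m :: 'a) \<noteq> of_nat n"
    by (metis eq_iff_diff_eq_0)
qed

lemma formally_real_infinite:
  assumes "formally_real TYPE('a::field)"
  shows "infinite (UNIV :: 'a set)"
  using range_inj_infinite[OF formally_real_inj_of_nat[OF assms]] by (meson infinite_super subset_UNIV)

lemma coeff_sum_list: "coeff (sum_list ps) n = sum_list (map (\<lambda>p. coeff p n) ps)"
  by (induct ps) simp_all

lemma coeff_sum_squares_max_degree_neq_0:
  fixes ps :: "'a::field poly list"
  assumes fr: "formally_real TYPE('a)" and p: "p \<in> set ps" "p \<noteq> 0"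
  defines "D \<equiv> Max (degree ` set ps)"
  shows "coeff (sum_list (map (\<lambda>p. p ^ 2) ps)) (2 * D) \<noteq> 0"
proof -
  have le: "degree q \<le> D" if "q \<in> set ps" for q
    using that unfolding D_def by simp
  obtain p' where p': "p' \<in> set ps" "p' \<noteq> 0" "degree p' = D"
  proof (cases "D = 0")
    case True
    then show ?thesis using that p le[OF p(1)] by simp
  next
    case False
    have "D \<in> degree ` set ps"
      unfolding D_def using p(1) by (intro Max_in) auto
    with False that show ?thesis by fastforce
  qed
  \<comment> \<open>Only the summands of maximal degree reach degree \<open>2 * D\<close>, each with a square as coefficient.\<close>
  have top: "coeff (q ^ 2) (2 * D) = (if degree q = D then lead_coeff q else 0) ^ 2"
    if "q \<in> set ps" for q
  proof (cases "degree q = D")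
    case True
    then show ?thesis
      using coeff_mult_degree_sum[of q q] by (simp add: power2_eq_square mult_2)
  next
    case False
    with le[OF that] have "degree (q ^ 2) < 2 * D"
      using degree_power_le[of q 2] by simp
    with False show ?thesis by (simp add: coeff_eq_0)
  qed
  have coeff_top: "coeff (sum_list (map (\<lambda>p. p ^ 2) ps)) (2 * D)
      = sum_list (map (\<lambda>x. x ^ 2) (map (\<lambda>q. if degree q = D then lead_coeff q else 0) ps))"
    by (simp add: coeff_sum_list o_def top cong: map_cong)
  have lead: "lead_coeff p' \<in> set (map (\<lambda>q. if degree q = D then lead_coeff q else 0) ps)"
    using p' by force
  show ?thesis
  proof
    assume "coeff (sum_list (map (\<lambda>p. p ^ 2) ps)) (2 * D) = 0"
    from formally_real_sum_squares_eq_0[OF fr _ lead] this coeff_top p'(2) show False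
      by simp
  qed
qed

lemma degree_le_sum_squares:
  fixes ps :: "'a::field poly list"
  assumes "formally_real TYPE('a)" and "p \<in> set ps"
  shows "2 * degree p \<le> degree (sum_list (map (\<lambda>p. p ^ 2) ps))"
proof (cases "p = 0")
  case False
  have "degree p \<le> Max (degree ` set ps)"
    using assms(2) by simp
  also have "2 * Max (degree ` set ps) \<le> degree (sum_list (map (\<lambda>p. p ^ 2) ps))"
    by (rule le_degree) (rule coeff_sum_squares_max_degree_neq_0[OF assms False])
  finally show ?thesis by simp
qed simp

lemma sum_squares_eq_0:
  fixes ps :: "'a::field poly list"
  assumes "formally_real TYPE('a)" and "sum_list (map (\<lambda>p. p ^ 2) ps) = 0" and "p \<in> set ps"
  shows "p = 0"
  using coeff_sum_squares_max_degree_neq_0[OF assms(1,3)] assms(2) by auto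

lemma sum_squares_set_eq_0:
  fixes f :: "'i \<Rightarrow> 'a::field poly"
  assumes "formally_real TYPE('a)" and "finite A" and "(\<Sum>i\<in>A. f i ^ 2) = 0" and "j \<in> A"
  shows "f j = 0"
proof -
  obtain xs where xs: "set xs = A" "distinct xs"
    using finite_distinct_list[OF assms(2)] by blast
  then have "sum_list (map (\<lambda>q. q ^ 2) (map f xs)) = 0"
    using assms(3) by (simp add: sum_list_distinct_conv_sum_set o_def)
  moreover have "f j \<in> set (map f xs)"
    using xs(1) assms(4) by simp
  ultimately show ?thesis
    by (rule sum_squares_eq_0[OF assms(1)])
qed

lemma degree_le_sum_even_powers:
  fixes ps :: "'a::field poly list"
  assumes "formally_real TYPE('a)" and "p \<in> set ps"
  shows "2 * n * degree p \<le> degree (sum_list (map (\<lambda>p. p ^ (2 * n)) ps))"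
proof -
  have "2 * degree (p ^ n) \<le> degree (sum_list (map (\<lambda>q. q ^ 2) (map (\<lambda>p. p ^ n) ps)))"
    using assms by (intro degree_le_sum_squares) auto
  moreover have "degree (p ^ n) = n * degree p"
    by (cases "p = 0") (simp_all add: degree_power_eq power_0_left)
  ultimately show ?thesis
    by (simp add: o_def power_mult mult.commute[of 2 n])
qed

lemma degree_eq_0_if_sum_even_powers_eq_1:
  fixes ps :: "'a::field poly list"
  assumes "formally_real TYPE('a)" and "sum_list (map (\<lambda>p. p ^ (2 * n)) ps) = 1"
    and "n > 0" and "p \<in> set ps"
  shows "degree p = 0"
  using degree_le_sum_even_powers[OF assms(1,4), of n] assms(2,3) by simp

section \<open>The degree in \<open>x\<close>\<close>

lemma deg_x_le_iff: "deg_x h \<le> N \<longleftrightarrow> (\<forall>b. degree (coeff h b) \<le> N)"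
proof -
  have "(\<forall>b. degree (coeff h b) \<le> N) \<longleftrightarrow> (\<forall>b\<le>degree h. degree (coeff h b) \<le> N)"
    by (metis coeff_eq_0 degree_0 le_0_eq le_less_linear zero_le)
  then show ?thesis
    unfolding deg_x_def by (auto simp add: Max_le_iff)
qed

lemma deg_x_less_iff:
  assumes "N > 0"
  shows "deg_x h < N \<longleftrightarrow> (\<forall>b. degree (coeff h b) < N)"
proof -
  from assms obtain M where "N = Suc M"
    using gr0_conv_Suc by blast
  then show ?thesis
    using deg_x_le_iff[of h M] by (simp add: less_Suc_eq_le)
qed

lemma degree_coeff_le_deg_x: "degree (coeff h b) \<le> deg_x h"
  using deg_x_le_iff[of h "deg_x h"] by simp

lemma deg_x_attained: "\<exists>b. degree (coeff h b) = deg_x h"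
proof -
  have "deg_x h \<in> (\<lambda>i. degree (coeff h i)) ` {..degree h}"
    unfolding deg_x_def by (intro Max_in) auto
  then show ?thesis by auto
qed

lemma deg_x_const [simp]: "deg_x [:a:] = degree a"
  by (simp add: deg_x_def)

lemma deg_x_0 [simp]: "deg_x 0 = 0"
  by (simp add: deg_x_def)

lemma deg_x_add_le: "deg_x (p + q) \<le> max (deg_x p) (deg_x q)"
  unfolding deg_x_le_iff
  by (metis coeff_add degree_add_le degree_coeff_le_deg_x max.coboundedI1 max.coboundedI2)

lemma deg_x_diff_le: "deg_x (p - q :: 'a::comm_ring poly poly) \<le> max (deg_x p) (deg_x q)"
  unfolding deg_x_le_iff
  by (metis coeff_diff degree_diff_le degree_coeff_le_deg_x max.coboundedI1 max.coboundedI2)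

lemma deg_x_sum_le:
  "finite A \<Longrightarrow> (\<And>i. i \<in> A \<Longrightarrow> deg_x (f i) \<le> N) \<Longrightarrow> deg_x (\<Sum>i\<in>A. f i) \<le> N"
  unfolding deg_x_le_iff coeff_sum by (blast intro: degree_sum_le)

lemma deg_x_mult_le: "deg_x (p * q :: 'a::comm_semiring_0 poly poly) \<le> deg_x p + deg_x q"
  unfolding deg_x_le_iff coeff_mult
  by (intro allI degree_sum_le order_trans[OF degree_mult_le] add_mono degree_coeff_le_deg_x) auto

lemma deg_x_power_le: "deg_x (p ^ n :: 'a::comm_semiring_1 poly poly) \<le> n * deg_x p"
proof (induction n)
  case (Suc n)
  then show ?case
    using deg_x_mult_le[of p "p ^ n"] by simp
qed (simp add: one_pCons)

lemma deg_x_sum_const_mult_less: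
  fixes p :: "'i \<Rightarrow> 'a::comm_semiring_1 poly poly"
  assumes "finite A" and "r > 0" and "\<And>i. i \<in> A \<Longrightarrow> deg_x (p i) < r"
  shows "deg_x (\<Sum>i\<in>A. [:[:c i:]:] * p i) < r"
proof -
  have "deg_x (\<Sum>i\<in>A. [:[:c i:]:] * p i) \<le> r - 1"
  proof (rule deg_x_sum_le[OF assms(1)])
    fix i
    assume "i \<in> A"
    then show "deg_x ([:[:c i:]:] * p i) \<le> r - 1"
      using deg_x_mult_le[of "[:[:c i:]:]" "p i"] assms(3) by fastforce
  qed
  with assms(2) show ?thesis
    by simp
qed

lemma degree_poly_const_le_deg_x:
  "degree (poly h [:z:]) \<le> deg_x (h :: 'a::comm_semiring_1 poly poly)"
proof -
  have "poly h [:z:] = (\<Sum>b\<le>degree h. coeff h b * [:z ^ b:])"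
    by (simp add: poly_altdef poly_const_pow)
  also have "degree \<dots> \<le> deg_x h"
    by (intro degree_sum_le order_trans[OF degree_mult_le]) (simp_all add: degree_coeff_le_deg_x)
  finally show ?thesis .
qed

lemma coeff_poly_const: "coeff (poly f [:z:]) m = poly (map_poly (\<lambda>a. coeff a m) f) z"
  by (induct f rule: pCons_induct) (simp_all add: map_poly_pCons)

lemma deg_x_eq_degree_poly_const:
  fixes f :: "'a::idom poly poly"
  assumes "infinite (UNIV :: 'a set)"
  shows "\<exists>z. degree (poly f [:z:]) = deg_x f"
proof -
  obtain b where b: "degree (coeff f b) = deg_x f"
    using deg_x_attained by blast
  show ?thesis
  proof (cases "coeff f b = 0")
    case True
    then show ?thesis
      using b degree_poly_const_le_deg_x[of f 0] by (intro exI[of _ 0]) simp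
  next
    case False
    define P where "P = map_poly (\<lambda>a. coeff a (deg_x f)) f"
    have "coeff P b \<noteq> 0"
      using False by (simp add: P_def coeff_map_poly flip: b)
    then have "P \<noteq> 0" by auto
    then have "{z. poly P z = 0} \<noteq> UNIV"
      using poly_roots_finite assms by metis
    then obtain z where "poly P z \<noteq> 0" by auto
    then have "coeff (poly f [:z:]) (deg_x f) \<noteq> 0"
      by (simp add: coeff_poly_const P_def)
    then have "deg_x f \<le> degree (poly f [:z:])"
      by (rule le_degree)
    with degree_poly_const_le_deg_x[of f z] show ?thesis
      by (intro exI[of _ z]) simp
  qed
qed

lemma poly_sum_list_map: "poly (sum_list (map h fs)) z = sum_list (map (\<lambda>f. poly (h f) z) fs)"
  by (induct fs) simp_all

lemma deg_x_le_sum_even_powers: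
  fixes fs :: "'a::field poly poly list"
  assumes fr: "formally_real TYPE('a)" and f: "f \<in> set fs"
  shows "2 * n * deg_x f \<le> deg_x (sum_list (map (\<lambda>f. f ^ (2 * n)) fs))"
proof -
  obtain z where z: "degree (poly f [:z:]) = deg_x f"
    using deg_x_eq_degree_poly_const[OF formally_real_infinite[OF fr]] by blast
  have "2 * n * degree (poly f [:z:])
      \<le> degree (sum_list (map (\<lambda>p. p ^ (2 * n)) (map (\<lambda>f. poly f [:z:]) fs)))"
    using f by (intro degree_le_sum_even_powers[OF fr]) simp
  also have "\<dots> = degree (poly (sum_list (map (\<lambda>f. f ^ (2 * n)) fs)) [:z:])"
    by (simp add: poly_sum_list_map o_def)
  also have "\<dots> \<le> deg_x (sum_list (map (\<lambda>f. f ^ (2 * n)) fs))"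
    by (rule degree_poly_const_le_deg_x)
  finally show ?thesis
    using z by simp
qed

section \<open>The curve \<open>y = x ^ r\<close>\<close>

lemma deg_x_pCons: "deg_x (pCons a p) = max (degree a) (deg_x p)"
proof (rule antisym)
  show "deg_x (pCons a p) \<le> max (degree a) (deg_x p)"
    unfolding deg_x_le_iff coeff_pCons
    by (auto simp: le_max_iff_disj degree_coeff_le_deg_x split: nat.split)
  show "max (degree a) (deg_x p) \<le> deg_x (pCons a p)"
    using degree_coeff_le_deg_x[of "pCons a p" 0] degree_coeff_le_deg_x[of "pCons a p" "Suc _"]
    by (auto simp: deg_x_le_iff)
qed

lemma var_x_power: "(var_x :: 'a::comm_ring_1 poly poly) ^ r = [:monom 1 r:]"
proof -
  have "[:0, 1:] = (monom 1 1 :: 'a poly)"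
    by (simp add: monom_Suc monom_0)
  then show ?thesis
    unfolding var_x_def by (simp add: poly_const_pow monom_power)
qed

lemma deg_x_curve_le: "deg_x (var_y - var_x ^ r :: 'a::comm_ring_1 poly poly) \<le> r"
  using deg_x_diff_le[of var_y "var_x ^ r"]
  by (simp add: var_y_def var_x_power deg_x_pCons degree_monom_eq)

lemma curve_neq_0: "(var_y - var_x ^ r :: 'a::comm_ring_1 poly poly) \<noteq> 0"
proof -
  have "coeff (var_y - var_x ^ r :: 'a poly poly) 1 = 1"
    by (simp add: var_y_def var_x_power)
  then show ?thesis by auto
qed

lemma poly_curve_monom: "poly (var_y - var_x ^ r :: 'a::comm_ring_1 poly poly) (monom 1 r) = 0"
  by (simp add: var_x_power var_y_def)

lemma deg_x_mult_curve_power_add_1_le: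
  "deg_x (g * (var_y - var_x ^ r) ^ n + 1 :: 'a::comm_ring_1 poly poly) \<le> deg_x g + n * r"
proof -
  have "deg_x ((var_y - var_x ^ r) ^ n :: 'a poly poly) \<le> n * r"
    using deg_x_power_le[of "var_y - var_x ^ r" n] mult_le_mono2[OF deg_x_curve_le[of r], of n]
    by (rule order_trans)
  then have "deg_x (g * (var_y - var_x ^ r) ^ n) \<le> deg_x g + n * r"
    using deg_x_mult_le[of g "(var_y - var_x ^ r) ^ n"] by linarith
  then show ?thesis
    using deg_x_add_le[of "g * (var_y - var_x ^ r) ^ n" 1] by (simp add: one_pCons)
qed

text \<open>Substituting \<open>y := x ^ r\<close> into a polynomial of \<open>x\<close>-degree below \<open>r\<close> just
  concatenates its coefficient blocks, so no information is lost.\<close>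

lemma coeff_poly_monom_deg_x_less:
  fixes h :: "'a::comm_ring_1 poly poly"
  assumes "deg_x h < r" and "m < r"
  shows "coeff (poly h (monom 1 r)) (r * b + m) = coeff (coeff h b) m"
  using assms(1)
proof (induction h arbitrary: b rule: pCons_induct)
  case (pCons a h)
  then have a: "degree a < r" and h: "deg_x h < r"
    by (simp_all add: deg_x_pCons)
  show ?case
  proof (cases b)
    case 0
    then show ?thesis
      using \<open>m < r\<close> by (simp add: coeff_monom_mult)
  next
    case (Suc b')
    then have "coeff a (r * b + m) = 0"
      using a by (intro coeff_eq_0) simp
    moreover have "r * b + m - r = r * b' + m"
      using Suc by simp
    ultimately show ?thesis
      using Suc pCons.IH[OF h, of b'] by (simp add: coeff_monom_mult)
  qed
qed simp

lemma deg_x_less_poly_monom_eq_0_iff: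
  fixes h :: "'a::comm_ring_1 poly poly"
  assumes "deg_x h < r"
  shows "poly h (monom 1 r) = 0 \<longleftrightarrow> h = 0"
proof
  assume vanish: "poly h (monom 1 r) = 0"
  show "h = 0"
  proof (rule poly_eqI)
    fix b
    have "coeff (coeff h b) m = 0" for m
    proof (cases "m < r")
      case True
      then show ?thesis
        using coeff_poly_monom_deg_x_less[OF assms True, of b] vanish by simp
    next
      case False
      then show ?thesis
        using assms degree_coeff_le_deg_x[of h b] by (intro coeff_eq_0) simp
    qed
    then show "coeff h b = coeff 0 b"
      by (simp add: poly_eq_iff)
  qed
qed simp

lemma poly_cutoff_add_shift:
  "poly_cutoff r a + monom 1 r * poly_shift r a = (a :: 'a::comm_semiring_1 poly)"
  by (rule poly_eqI) (simp add: coeff_poly_cutoff coeff_monom_mult coeff_poly_shift)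

lemma degree_poly_cutoff_less:
  assumes "r > 0"
  shows "degree (poly_cutoff r a) < r"
proof -
  have "degree (poly_cutoff r a) \<le> r - 1"
    by (rule degree_le) (auto simp: coeff_poly_cutoff)
  with assms show ?thesis by simp
qed

lemma degree_poly_shift_le: "degree (poly_shift r a) \<le> degree a - r"
  by (rule degree_le) (simp add: coeff_poly_shift coeff_eq_0)

text \<open>Reduce every coefficient modulo \<open>x ^ r\<close> and trade the quotient \<open>x ^ r\<close> for \<open>y\<close>:
  this changes \<open>f\<close> by a multiple of \<open>y - x ^ r\<close> and leaves a polynomial of \<open>x\<close>-degree
  below \<open>r\<close>, which is then determined by its value on the curve.\<close>

lemma const_on_curve_decompose:
  fixes f :: "'a::comm_ring_1 poly poly"
  assumes deg: "deg_x f < 2 * r" and on_curve: "poly f (monom 1 r) = [:c:]"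
  shows "\<exists>p. deg_x p < r \<and> f = [:[:c:]:] - (var_y - var_x ^ r) * p"
proof -
  define t :: "'a poly poly" where "t = var_y - var_x ^ r"
  have "r > 0"
    using deg by simp
  define lo where "lo = map_poly (poly_cutoff r) f"
  define hi where "hi = map_poly (poly_shift r) f"
  have coeff_lo: "coeff lo b = poly_cutoff r (coeff f b)" for b
    by (simp add: lo_def coeff_map_poly)
  have coeff_hi: "coeff hi b = poly_shift r (coeff f b)" for b
    by (simp add: hi_def coeff_map_poly)
  have deg_lo: "deg_x lo < r"
    using \<open>r > 0\<close> by (simp add: deg_x_less_iff coeff_lo degree_poly_cutoff_less)
  have "degree (poly_shift r (coeff f b)) < r" for b
    using degree_poly_shift_le[of r "coeff f b"] degree_coeff_le_deg_x[of f b] deg by linarith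
  then have deg_hi: "deg_x hi < r"
    using \<open>r > 0\<close> by (simp add: deg_x_less_iff coeff_hi)
  have "f = lo + smult (monom 1 r) hi"
    by (rule poly_eqI) (simp add: coeff_lo coeff_hi poly_cutoff_add_shift)
  moreover have "t * hi = pCons 0 hi - smult (monom 1 r) hi"
    by (simp add: t_def var_x_power var_y_def algebra_simps)
  ultimately have f_eq: "f = (lo + pCons 0 hi) - t * hi"
    by simp
  have t_on_curve: "poly t (monom 1 r) = 0"
    unfolding t_def by (rule poly_curve_monom)
  have "deg_x (lo + pCons 0 hi - [:[:c:]:]) < r"
    using deg_lo deg_hi \<open>r > 0\<close> deg_x_add_le[of lo "pCons 0 hi"] deg_x_diff_le[of "lo + pCons 0 hi" "[:[:c:]:]"]
    by (simp add: deg_x_pCons)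
  moreover have "poly (lo + pCons 0 hi - [:[:c:]:]) (monom 1 r) = 0"
    using on_curve t_on_curve by (subst (asm) f_eq) simp
  ultimately have "lo + pCons 0 hi = [:[:c:]:]"
    using deg_x_less_poly_monom_eq_0_iff by fastforce
  with f_eq deg_hi show ?thesis
    unfolding t_def by auto
qed

section \<open>Expansion in powers of \<open>y - x ^ r\<close>\<close>

lemma power_diff_expansion:
  fixes a b t :: "'a::comm_ring_1"
  shows "\<exists>R. (a - t * b) ^ (m + 2) = a ^ (m + 2) - of_nat (m + 2) * t * (a ^ (m + 1) * b)
           + of_nat ((m + 2) choose 2) * t ^ 2 * (a ^ m * b ^ 2) + t ^ 3 * R"
proof (induction m)
  case 0
  have "(0 + 2 :: nat) choose 2 = 1"
    by (simp add: numeral_2_eq_2)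
  then show ?case
    by (intro exI[of _ 0]) (simp add: power2_eq_square algebra_simps)
next
  case (Suc m)
  then obtain R where R: "(a - t * b) ^ (m + 2) = a ^ (m + 2) - of_nat (m + 2) * t * (a ^ (m + 1) * b)
      + of_nat ((m + 2) choose 2) * t ^ 2 * (a ^ m * b ^ 2) + t ^ 3 * R"
    by blast
  have choose: "Suc m + 2 choose 2 = (m + 2 choose 2) + (m + 2)"
    by (simp add: numeral_2_eq_2)
  have "(a - t * b) ^ (Suc m + 2) = (a - t * b) * (a - t * b) ^ (m + 2)"
    by simp
  also have "\<dots> = a ^ (Suc m + 2) - of_nat (Suc m + 2) * t * (a ^ (Suc m + 1) * b)
      + of_nat (Suc m + 2 choose 2) * t ^ 2 * (a ^ Suc m * b ^ 2)
      + t ^ 3 * (a * R - of_nat (m + 2 choose 2) * a ^ m * b ^ 3 - t * b * R)"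
    unfolding R choose by (simp add: algebra_simps power2_eq_square power3_eq_cube)
  finally show ?case
    by blast
qed

lemma sum_power_diff_expansion:
  fixes a b :: "'i \<Rightarrow> 'a::comm_ring_1" and t :: 'a
  assumes "finite A"
  shows "\<exists>R. (\<Sum>i\<in>A. (a i - t * b i) ^ (m + 2)) = (\<Sum>i\<in>A. a i ^ (m + 2))
           - of_nat (m + 2) * t * (\<Sum>i\<in>A. a i ^ (m + 1) * b i)
           + of_nat ((m + 2) choose 2) * t ^ 2 * (\<Sum>i\<in>A. a i ^ m * b i ^ 2) + t ^ 3 * R"
  using assms
proof (induction A rule: finite_induct)
  case empty
  show ?case
    by (intro exI[of _ 0]) simp
next
  case (insert j A)
  then obtain R where "(\<Sum>i\<in>A. (a i - t * b i) ^ (m + 2)) = (\<Sum>i\<in>A. a i ^ (m + 2))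
      - of_nat (m + 2) * t * (\<Sum>i\<in>A. a i ^ (m + 1) * b i)
      + of_nat ((m + 2) choose 2) * t ^ 2 * (\<Sum>i\<in>A. a i ^ m * b i ^ 2) + t ^ 3 * R"
    by blast
  moreover obtain R' where "(a j - t * b j) ^ (m + 2)
      = a j ^ (m + 2) - of_nat (m + 2) * t * (a j ^ (m + 1) * b j) + of_nat ((m + 2) choose 2) * t ^ 2 * (a j ^ m * b j ^ 2) + t ^ 3 * R'"
    using power_diff_expansion by blast
  ultimately show ?case
    using insert by (intro exI[of _ "R + R'"]) (simp add: algebra_simps)
qed

lemma poly_monom_eq_0_of_nat_mult_eq_curve_mult:
  fixes h z :: "'a::field poly poly"
  assumes fr: "formally_real TYPE('a)"
    and "of_nat N * h = (var_y - var_x ^ r) * z" and "N > 0"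
  shows "poly h (monom 1 r) = 0"
proof -
  have "of_nat N * poly h (monom 1 r) = poly ((var_y - var_x ^ r) * z) (monom 1 r)"
    by (simp flip: assms(2))
  also have "\<dots> = 0"
    by (simp only: poly_mult poly_curve_monom mult_zero_left)
  finally have "of_nat N * poly h (monom 1 r) = 0" .
  moreover have "(of_nat N :: 'a poly) \<noteq> 0"
    using formally_real_of_nat_neq_0[OF fr \<open>N > 0\<close>] by (simp add: of_nat_poly)
  ultimately show ?thesis
    by simp
qed

lemma weighted_sum_squares_on_curve:
  fixes c :: "'i \<Rightarrow> 'a::field" and p :: "'i \<Rightarrow> 'a poly poly"
  assumes fr: "formally_real TYPE('a)" and "finite A"
    and deg_p: "\<And>i. i \<in> A \<Longrightarrow> deg_x (p i) < r"
    and vanish: "poly (\<Sum>i\<in>A. [:[:c i:]:] ^ (2 * k) * p i ^ 2) (monom 1 r) = 0"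
    and "j \<in> A" and "c j \<noteq> 0"
  shows "p j = 0"
proof -
  have "(\<Sum>i\<in>A. ([:c i:] ^ k * poly (p i) (monom 1 r)) ^ 2) = 0"
    using vanish
    by (simp add: poly_sum power_mult_distrib poly_const_pow power_mult mult.commute[of 2 k] smult_power)
  from sum_squares_set_eq_0[OF fr \<open>finite A\<close> this \<open>j \<in> A\<close>]
  have "[:c j:] ^ k * poly (p j) (monom 1 r) = 0" .
  with \<open>c j \<noteq> 0\<close> have "poly (p j) (monom 1 r) = 0"
    by simp
  with deg_p[OF \<open>j \<in> A\<close>] show ?thesis
    by (simp add: deg_x_less_poly_monom_eq_0_iff)
qed

lemma sum_constants_on_curve:
  fixes c :: "'i \<Rightarrow> 'a::comm_ring_1"
  assumes G: "g * (var_y - var_x ^ r) ^ n + 1 = (\<Sum>i\<in>A. ([:[:c i:]:] - (var_y - var_x ^ r) * p i) ^ n)"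
    and "n > 0"
  shows "(\<Sum>i\<in>A. c i ^ n) = 1"
proof -
  define t :: "'a poly poly" where "t = var_y - var_x ^ r"
  have t_on_curve: "poly t (monom 1 r) = 0"
    unfolding t_def by (rule poly_curve_monom)
  have "1 = poly (g * t ^ n + 1) (monom 1 r)"
    using t_on_curve \<open>n > 0\<close> by (simp add: zero_power)
  also have "\<dots> = (\<Sum>i\<in>A. [:c i:] ^ n)"
    unfolding G[folded t_def] using t_on_curve \<open>n > 0\<close> by (simp add: poly_sum)
  also have "\<dots> = [:\<Sum>i\<in>A. c i ^ n:]"
    by (simp add: poly_const_pow sum_to_poly)
  finally show ?thesis
    by (simp add: one_pCons)
qed

lemma perturbed_powers_expansion:
  fixes c :: "'i \<Rightarrow> 'a::comm_ring_1" and p :: "'i \<Rightarrow> 'a poly poly" and r :: nat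
  defines "t \<equiv> var_y - var_x ^ r"
  assumes "finite A"
    and G: "g * t ^ (m + 2) + 1 = (\<Sum>i\<in>A. ([:[:c i:]:] - t * p i) ^ (m + 2))"
  shows "\<exists>R. g * t ^ (m + 2) = - (of_nat (m + 2) * t * (\<Sum>i\<in>A. [:[:c i:]:] ^ (m + 1) * p i))
           + of_nat ((m + 2) choose 2) * t ^ 2 * (\<Sum>i\<in>A. [:[:c i:]:] ^ m * p i ^ 2) + t ^ 3 * R"
proof -
  have "(\<Sum>i\<in>A. c i ^ (m + 2)) = 1"
    using sum_constants_on_curve[OF G[unfolded t_def]] by simp
  then have sum_C: "(\<Sum>i\<in>A. [:[:c i:]:] ^ (m + 2)) = 1"
    by (simp add: poly_const_pow sum_to_poly one_pCons)
  obtain R where "(\<Sum>i\<in>A. ([:[:c i:]:] - t * p i) ^ (m + 2))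
      = (\<Sum>i\<in>A. [:[:c i:]:] ^ (m + 2)) - of_nat (m + 2) * t * (\<Sum>i\<in>A. [:[:c i:]:] ^ (m + 1) * p i)
        + of_nat ((m + 2) choose 2) * t ^ 2 * (\<Sum>i\<in>A. [:[:c i:]:] ^ m * p i ^ 2) + t ^ 3 * R"
    using sum_power_diff_expansion[OF \<open>finite A\<close>, where a = "\<lambda>i. [:[:c i:]:]" and b = p] by blast
  with G have "g * t ^ (m + 2) + 1 = 1 - of_nat (m + 2) * t * (\<Sum>i\<in>A. [:[:c i:]:] ^ (m + 1) * p i)
      + of_nat ((m + 2) choose 2) * t ^ 2 * (\<Sum>i\<in>A. [:[:c i:]:] ^ m * p i ^ 2) + t ^ 3 * R"
    unfolding sum_C by simp
  then show ?thesis
    by (intro exI[of _ R]) (simp add: algebra_simps)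
qed

text \<open>Compare the expansion with \<open>1 + g t ^ (2 s)\<close> in powers of \<open>t = y - x ^ r\<close>: the
  coefficient of \<open>t\<close> has \<open>x\<close>-degree below \<open>r\<close>, hence vanishes, and then the coefficient of
  \<open>t ^ 2\<close> vanishes on the curve.  This needs \<open>2 s > 2\<close>.\<close>

lemma perturbation_vanishes:
  fixes c :: "'i \<Rightarrow> 'a::field" and p :: "'i \<Rightarrow> 'a poly poly"
  assumes fr: "formally_real TYPE('a)" and "s > 1" and "finite A"
    and deg_p: "\<And>i. i \<in> A \<Longrightarrow> deg_x (p i) < r"
    and G: "g * (var_y - var_x ^ r) ^ (2 * s) + 1
              = (\<Sum>i\<in>A. ([:[:c i:]:] - (var_y - var_x ^ r) * p i) ^ (2 * s))"
    and "j \<in> A" and "c j \<noteq> 0"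
  shows "p j = 0"
proof -
  define t :: "'a poly poly" where "t = var_y - var_x ^ r"
  define m where "m = 2 * (s - 1)"
  define q where "q = (m + 2) choose 2"
  define S1 where "S1 = (\<Sum>i\<in>A. [:[:c i:]:] ^ (m + 1) * p i)"
  define S2 where "S2 = (\<Sum>i\<in>A. [:[:c i:]:] ^ m * p i ^ 2)"
  have n: "2 * s = m + 2" and "m \<ge> 2"
    using \<open>s > 1\<close> by (simp_all add: m_def)
  have "t \<noteq> 0"
    unfolding t_def by (rule curve_neq_0)
  have "r > 0"
    using deg_p[OF \<open>j \<in> A\<close>] by simp
  obtain R where R: "g * t ^ (m + 2) = - (of_nat (m + 2) * t * S1) + of_nat q * t ^ 2 * S2 + t ^ 3 * R"
    using perturbed_powers_expansion[OF \<open>finite A\<close> G[unfolded n]]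
    unfolding t_def S1_def S2_def q_def by blast
  have "t * (of_nat (m + 2) * S1) = t * (t * (of_nat q * S2 + t * R - g * t ^ m))"
    using R by (simp add: algebra_simps power2_eq_square power3_eq_cube)
  then have "of_nat (m + 2) * S1 = t * (of_nat q * S2 + t * R - g * t ^ m)"
    using \<open>t \<noteq> 0\<close> by simp
  then have "poly S1 (monom 1 r) = 0"
    unfolding t_def by (rule poly_monom_eq_0_of_nat_mult_eq_curve_mult[OF fr]) simp
  moreover have "deg_x S1 < r"
    unfolding S1_def poly_const_pow
    by (rule deg_x_sum_const_mult_less[OF \<open>finite A\<close> \<open>r > 0\<close> deg_p])
  ultimately have "S1 = 0"
    by (simp add: deg_x_less_poly_monom_eq_0_iff)
  moreover have "t * t ^ (m - 1) = t ^ m"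
    using \<open>m \<ge> 2\<close> by (simp flip: power_Suc)
  ultimately have "t ^ 2 * (of_nat q * S2) = t ^ 2 * (t * (g * t ^ (m - 1) - R))"
    using R by (simp add: algebra_simps power2_eq_square power3_eq_cube)
  then have "of_nat q * S2 = t * (g * t ^ (m - 1) - R)"
    using \<open>t \<noteq> 0\<close> by simp
  then have "poly S2 (monom 1 r) = 0"
    unfolding t_def by (rule poly_monom_eq_0_of_nat_mult_eq_curve_mult[OF fr]) (simp add: q_def)
  then show ?thesis
    using weighted_sum_squares_on_curve[OF fr \<open>finite A\<close> deg_p] \<open>j \<in> A\<close> \<open>c j \<noteq> 0\<close>
    unfolding S2_def m_def by simp
qed

lemma sum_of_powers_sum:
  assumes "finite I"
  shows "sum_of_powers m (card I) (\<Sum>i\<in>I. f i ^ m)"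
proof -
  obtain xs where xs: "set xs = I" "distinct xs"
    using finite_distinct_list[OF assms] by blast
  then have "(\<Sum>i\<in>I. f i ^ m) = sum_list (map (\<lambda>x. x ^ m) (map f xs))"
    by (simp add: sum_list_distinct_conv_sum_set o_def)
  moreover have "length (map f xs) = card I"
    using xs distinct_card by fastforce
  ultimately show ?thesis
    unfolding sum_of_powers_def by blast
qed

lemma sum_of_powers_mult_power_add_1:
  assumes "sum_of_powers n k g"
  shows "sum_of_powers n (k + 1) (g * u ^ n + 1)"
proof -
  obtain hs where hs: "length hs = k" "g = sum_list (map (\<lambda>h. h ^ n) hs)"
    using assms unfolding sum_of_powers_def by blast
  have "sum_list (map (\<lambda>h. h ^ n) hs) * u ^ n = sum_list (map (\<lambda>h. (h * u) ^ n) hs)"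
    by (induct hs) (simp_all add: algebra_simps)
  then have "g * u ^ n + 1 = sum_list (map (\<lambda>h. h ^ n) (map (\<lambda>h. h * u) hs @ [1]))"
    by (simp add: hs(2) o_def)
  then show ?thesis
    unfolding sum_of_powers_def using hs(1) by (intro exI[of _ "map (\<lambda>h. h * u) hs @ [1]"]) simp
qed

lemma sum_of_powers_of_perturbed_constants:
  fixes c :: "'i \<Rightarrow> 'a::field" and p :: "'i \<Rightarrow> 'a poly poly"
  assumes fr: "formally_real TYPE('a)" and "s > 1" and "finite A"
    and deg_p: "\<And>i. i \<in> A \<Longrightarrow> deg_x (p i) < r"
    and G: "g * (var_y - var_x ^ r) ^ (2 * s) + 1
              = (\<Sum>i\<in>A. ([:[:c i:]:] - (var_y - var_x ^ r) * p i) ^ (2 * s))"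
  shows "sum_of_powers (2 * s) (card A - 1) g"
proof -
  define t :: "'a poly poly" where "t = var_y - var_x ^ r"
  have "t \<noteq> 0"
    unfolding t_def by (rule curve_neq_0)
  have sum_c: "(\<Sum>i\<in>A. c i ^ (2 * s)) = 1"
    using sum_constants_on_curve[OF G] \<open>s > 1\<close> by simp
  have "\<exists>j\<in>A. c j \<noteq> 0"
  proof (rule ccontr)
    assume "\<not> (\<exists>j\<in>A. c j \<noteq> 0)"
    then have "(\<Sum>i\<in>A. c i ^ (2 * s)) = 0"
      using \<open>s > 1\<close> by simp
    with sum_c show False
      by simp
  qed
  then obtain j where j: "j \<in> A" "c j \<noteq> 0"
    by blast
  have vanish: "p i = 0" if "i \<in> A" "c i \<noteq> 0" for i
    using perturbation_vanishes[OF fr \<open>s > 1\<close> \<open>finite A\<close> deg_p G that] .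
  have "([:[:c i:]:] - t * p i) ^ (2 * s) = [:[:c i:]:] ^ (2 * s) + t ^ (2 * s) * p i ^ (2 * s)"
    if "i \<in> A" for i
    using vanish[OF that] \<open>s > 1\<close> by (cases "c i = 0") (simp_all add: power_mult_distrib)
  then have "g * t ^ (2 * s) + 1 = (\<Sum>i\<in>A. [:[:c i:]:] ^ (2 * s)) + t ^ (2 * s) * (\<Sum>i\<in>A. p i ^ (2 * s))"
    using G unfolding t_def[symmetric] by (simp add: sum.distrib sum_distrib_left)
  also have "(\<Sum>i\<in>A. [:[:c i:]:] ^ (2 * s)) = 1"
    using sum_c by (simp add: poly_const_pow sum_to_poly one_pCons)
  finally have "g = (\<Sum>i\<in>A. p i ^ (2 * s))"
    using \<open>t \<noteq> 0\<close> by (simp add: mult.commute)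
  also have "\<dots> = (\<Sum>i\<in>A - {j}. p i ^ (2 * s))"
    using vanish[OF j] \<open>finite A\<close> j(1) \<open>s > 1\<close> by (simp add: sum.remove)
  finally show ?thesis
    using sum_of_powers_sum[of "A - {j}" "2 * s" p] \<open>finite A\<close> j(1) by simp
qed

lemma sum_of_powers_pred_of_curve_perturbation:
  fixes g :: "'a::field poly poly"
  assumes fr: "formally_real TYPE('a)" and "s > 1" and deg_g: "deg_x g < 2 * s * r"
    and "sum_of_powers (2 * s) l (g * (var_y - var_x ^ r) ^ (2 * s) + 1)"
  shows "sum_of_powers (2 * s) (l - 1) g"
proof -
  define t :: "'a poly poly" where "t = var_y - var_x ^ r"
  obtain fs where "length fs = l" and G: "g * t ^ (2 * s) + 1 = sum_list (map (\<lambda>f. f ^ (2 * s)) fs)"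
    using assms(4) unfolding sum_of_powers_def t_def by blast
  have deg_G: "deg_x (g * t ^ (2 * s) + 1) < 2 * s * (2 * r)"
    using deg_x_mult_curve_power_add_1_le[of g r "2 * s"] deg_g unfolding t_def by linarith
  have deg_f: "deg_x f < 2 * r" if "f \<in> set fs" for f
  proof -
    have "2 * s * deg_x f < 2 * s * (2 * r)"
      using deg_x_le_sum_even_powers[OF fr that, of s] deg_G unfolding G by linarith
    then show ?thesis
      by (metis mult_less_cancel1)
  qed
  have "poly t (monom 1 r) = 0"
    unfolding t_def by (rule poly_curve_monom)
  then have "sum_list (map (\<lambda>p. p ^ (2 * s)) (map (\<lambda>f. poly f (monom 1 r)) fs)) = 1"
    using arg_cong[OF G, of "\<lambda>f. poly f (monom 1 r)"] \<open>s > 1\<close>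
    by (simp add: poly_sum_list_map o_def zero_power)
  then have on_curve: "degree (poly f (monom 1 r)) = 0" if "f \<in> set fs" for f
    by (rule degree_eq_0_if_sum_even_powers_eq_1[OF fr, where n = s]) (use \<open>s > 1\<close> that in auto)
  have "\<exists>c p. deg_x p < r \<and> fs ! i = [:[:c:]:] - t * p" if "i < l" for i
  proof -
    have "fs ! i \<in> set fs"
      using that \<open>length fs = l\<close> by simp
    then show ?thesis
      using const_on_curve_decompose[OF deg_f] on_curve degree_0_id unfolding t_def by metis
  qed
  then obtain c p where cp: "\<And>i. i < l \<Longrightarrow> deg_x (p i) < r \<and> fs ! i = [:[:c i:]:] - t * p i"
    by metis
  have "g * t ^ (2 * s) + 1 = (\<Sum>i\<in>{..<l}. ([:[:c i:]:] - t * p i) ^ (2 * s))"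
    unfolding G sum_list_sum_nth using \<open>length fs = l\<close> cp by (simp add: atLeast0LessThan)
  from sum_of_powers_of_perturbed_constants[OF fr \<open>s > 1\<close> finite_lessThan _ this[unfolded t_def]] cp
  show ?thesis
    by simp
qed

theorem mainTheorem1:
  fixes g :: "'a::field poly poly" and s k r :: nat
  assumes "formally_real TYPE('a)"
    and "s > 1"
    and "g \<noteq> 0"
    and "k > 0"
    and "has_m_length (2 * s) g k"
    and "r > 0"
    and "deg_x g < 2 * s * r"
  shows "has_m_length (2 * s) (g * (var_y - var_x ^ r) ^ (2 * s) + 1) (k + 1)"
proof -
  let ?G = "g * (var_y - var_x ^ r) ^ (2 * s) + 1"
  have k: "sum_of_powers (2 * s) k g" and shorter: "\<And>l. 0 < l \<Longrightarrow> l < k \<Longrightarrow> \<not> sum_of_powers (2 * s) l g"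
    using assms(5) unfolding has_m_length_def by auto
  have "\<not> sum_of_powers (2 * s) l ?G" if "l < k + 1" for l
  proof
    assume "sum_of_powers (2 * s) l ?G"
    then have g: "sum_of_powers (2 * s) (l - 1) g"
      using sum_of_powers_pred_of_curve_perturbation assms(1,2,7) by blast
    show False
    proof (cases "l - 1 = 0")
      case True
      with g assms(3) show False
        by (simp add: sum_of_powers_def)
    next
      case False
      with \<open>l < k + 1\<close> have "0 < l - 1" "l - 1 < k"
        by auto
      with g shorter show False
        by blast
    qed
  qed
  then show ?thesis
    using sum_of_powers_mult_power_add_1[OF k] unfolding has_m_length_def by auto
qed

end
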